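(* Let $K$ be a field of characteristic $p>0$ such that $K/k$ is a finitely generated field extension, where $k=\bigcap_{n\ge0}K^{p^n}$. Let $W_\bullet$ be a power tower on $K$. Then \[\dim_{W_1}(K)\ge\dim_{W_2}(W_1)\ge\cdots\ge\dim_{W_n}(W_{n-1})\ge\cdots\ge0.\]
   Context: A power tower on $K$ is a sequence of subfields $W_0,W_1,W_2,\ldots$ of $K$ such that $W_j=W_i\cdot K^{p^j}$ whenever $j\le i$, where $\cdot$ denotes the compositum in $K$. *)

theory Defs
  imports "HOL-Algebra.Algebra" "HOL-Computational_Algebra.Primes"
begin

definition frob_image :: "('a, 'b) ring_scheme \<Rightarrow> nat \<Rightarrow> nat \<Rightarrow> 'a set" where
  "frob_image R p n = {x [^]\<^bsub>R\<^esub> (p ^ n) | x. x \<in> carrier R}"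

definition compositum :: "('a, 'b) ring_scheme \<Rightarrow> 'a set \<Rightarrow> 'a set \<Rightarrow> 'a set" where
  "compositum R A B = generate_field R (A \<union> B)"

definition power_tower :: "('a, 'b) ring_scheme \<Rightarrow> nat \<Rightarrow> (nat \<Rightarrow> 'a set) \<Rightarrow> bool" where
  "power_tower R p W \<longleftrightarrow>
     (\<forall>i. subfield (W i) R) \<and>
     (\<forall>i j. j \<le> i \<longrightarrow> W j = compositum R (W i) (frob_image R p j))"

end

(* Frobenius x \<mapsto> x^p is an injective field endomorphism, so it carries the extension
   W_n / W_(n+1) isomorphically onto W_n^p / W_(n+1)^p; the tower axioms give
   W_(n+1)^p \<subseteq> W_(n+2) and W_(n+1) = W_(n+2) \<cdot> W_n^p.  If E/M is finite and L \<supseteq> M, an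
   M-basis of E spans the compositum L \<cdot> E over L, so [L \<cdot> E : L] \<le> [E : M]; with
   M = W_(n+1)^p, E = W_n^p and L = W_(n+2) this is [W_(n+1) : W_(n+2)] \<le> [W_n : W_(n+1)].
   The library's dim is meaningful only for finite extensions, so finiteness is carried
   along by induction, starting from K = W_0: it is generated over W_1 \<supseteq> k by finitely
   many elements, each algebraic over W_1 because its p-th power lies in K^p \<subseteq> W_1. *)

theory Submission
  imports Defs
begin

lemma (in cring) binomial_expansion:
  assumes a: "a \<in> carrier R" and b: "b \<in> carrier R"
  shows "(a \<oplus> b) [^] n = (\<Oplus>k\<in>{..n}. add_pow R (n choose k) (a [^] k \<otimes> b [^] (n - k)))"
proof (induction n)
  case 0
  then show ?case using a b by simp
next
  case (Suc n)
  define T where "T k = a [^] k \<otimes> b [^] (Suc n - k)" for k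
  define c where "c k = (if k = 0 then 0 else n choose (k - 1))" for k
  have T: "T k \<in> carrier R" for k using a b by (simp add: T_def)
  define S where "S = (\<Oplus>k\<in>{..n}. add_pow R (n choose k) (a [^] k \<otimes> b [^] (n - k)))"
  have S: "S \<in> carrier R" unfolding S_def using a b by (intro finsum_closed) auto
  have "a \<otimes> S = (\<Oplus>k\<in>{..n}. add_pow R (c (Suc k)) (T (Suc k)))"
    unfolding S_def using a b
    by (subst finsum_rdistr) (auto intro!: finsum_cong' simp: T_def c_def add_pow_rdistr m_ac)
  also have "\<dots> = (\<Oplus>k\<in>{..Suc n}. add_pow R (c k) (T k))"
    using finsum_Suc2[of "\<lambda>k. add_pow R (c k) (T k)" n] T by (simp add: c_def)
  finally have aS: "a \<otimes> S = (\<Oplus>k\<in>{..Suc n}. add_pow R (c k) (T k))" .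
  have "b \<otimes> S = (\<Oplus>k\<in>{..n}. add_pow R (n choose k) (T k))"
    unfolding S_def using a b
    by (subst finsum_rdistr) (auto intro!: finsum_cong' simp: T_def add_pow_rdistr m_ac Suc_diff_le)
  also have "\<dots> = (\<Oplus>k\<in>{..Suc n}. add_pow R (n choose k) (T k))"
    using finsum_Suc[of "\<lambda>k. add_pow R (n choose k) (T k)" n] T by (simp add: binomial_eq_0)
  finally have bS: "b \<otimes> S = (\<Oplus>k\<in>{..Suc n}. add_pow R (n choose k) (T k))" .
  have pascal:
    "add_pow R (c k) (T k) \<oplus> add_pow R (n choose k) (T k) = add_pow R (Suc n choose k) (T k)" for k
    using add.nat_pow_mult[OF T[of k], of "c k" "n choose k"] T[of k] by (cases k) (simp_all add: c_def)
  have "(a \<oplus> b) [^] Suc n = a \<otimes> S \<oplus> b \<otimes> S"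
    using Suc S a b by (simp add: S_def l_distr m_comm)
  also have "\<dots> = (\<Oplus>k\<in>{..Suc n}. add_pow R (Suc n choose k) (T k))"
    unfolding aS bS using T by (simp add: finsum_addf[symmetric] pascal del: finsum_Suc)
  finally show ?case by (simp add: T_def)
qed

lemma (in ring) add_pow_char_eq_zero:
  assumes char: "add_pow R (p::nat) \<one> = \<zero>" and x: "x \<in> carrier R" and dvd: "p dvd m"
  shows "add_pow R m x = \<zero>"
proof -
  obtain q where m: "m = p * q" using dvd by blast
  have "add_pow R p x = \<zero>"
    using add_pow_ldistr[OF one_closed x, of p] char x by simp
  then show ?thesis
    unfolding m using add.nat_pow_pow[OF x, of q p] by simp
qed

lemma (in cring) frobenius_add:
  assumes a: "a \<in> carrier R" and b: "b \<in> carrier R"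
    and p: "Factorial_Ring.prime (p::nat)" and char: "add_pow R p \<one> = \<zero>"
  shows "(a \<oplus> b) [^] p = a [^] p \<oplus> b [^] p"
proof -
  define h where "h k = add_pow R (p choose k) (a [^] k \<otimes> b [^] (p - k))" for k
  have h: "h \<in> A \<rightarrow> carrier R" for A using a b by (simp add: h_def)
  have "p \<noteq> 0" using p by auto
  have "(a \<oplus> b) [^] p = (\<Oplus>k\<in>{..p}. h k)" unfolding h_def by (rule binomial_expansion[OF a b])
  also have "\<dots> = (\<Oplus>k\<in>{p, 0}. h k)"
  proof (rule add.finprod_mono_neutral_cong_right)
    show "h i = \<zero>" if "i \<in> {..p} - {p, 0}" for i
      using that p a b dvd_choose_prime[of i p] by (auto simp: h_def intro!: add_pow_char_eq_zero[OF char])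
  qed (use h in auto)
  also have "\<dots> = a [^] p \<oplus> b [^] p"
    using \<open>p \<noteq> 0\<close> a b h by (simp add: h_def)
  finally show ?thesis .
qed

lemma (in ring) subring_nat_pow_closed:
  assumes K: "subring K R" and x: "x \<in> K"
  shows "x [^] (n::nat) \<in> K"
  using subringE(3,6)[OF K] x by (induction n) auto

lemma (in field) subfield_vimage:
  assumes h: "h \<in> ring_hom R R" and K: "subfield K R"
  shows "subfield {x \<in> carrier R. h x \<in> K} R"
proof -
  note K_props = subringE[OF subfieldE(1)[OF K]]
  note h_a_inv = ring_hom_cring.hom_a_inv[OF ring_hom_cringI[OF is_cring is_cring h]]
  have h_closed: "h x \<in> carrier R" if "x \<in> carrier R" for x
    using ring_hom_closed[OF h that] .
  have inv_mult: "h (inv x) \<otimes> h x = \<one>" if "x \<in> carrier R" "x \<noteq> \<zero>" for x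
  proof -
    have x: "x \<in> Units R" using that field_Units by blast
    have "h (inv x) \<otimes> h x = h (inv x \<otimes> x)"
      using x by (metis Units_closed Units_inv_closed ring_hom_mult[OF h])
    also have "\<dots> = \<one>" using x ring_hom_one[OF h] by simp
    finally show ?thesis .
  qed
  have h_nonzero: "h x \<noteq> \<zero>" if "x \<in> carrier R" "x \<noteq> \<zero>" for x
  proof
    assume "h x = \<zero>"
    then have "\<one> = \<zero>"
      using inv_mult[OF that] h_closed[of "inv x"] that field_Units by auto
    then show False by simp
  qed
  have h_inv: "h (inv x) = inv (h x)" if "x \<in> carrier R" "x \<noteq> \<zero>" for x
  proof -
    have "inv x \<in> carrier R" using that field_Units by auto
    then have "h x \<otimes> h (inv x) = \<one>"
      using inv_mult[OF that] m_comm[OF h_closed h_closed] that(1) by metis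
    then show ?thesis
      using comm_inv_char h_closed \<open>inv x \<in> carrier R\<close> that(1) by metis
  qed
  show ?thesis
  proof (rule subfieldI'[OF subringI])
    show "inv k \<in> {x \<in> carrier R. h x \<in> K}"
      if "k \<in> {x \<in> carrier R. h x \<in> K} - {\<zero>}" for k
      using that h_inv h_nonzero subfield_m_inv(1)[OF K] field_Units by auto
  qed (auto simp: K_props ring_hom_one[OF h] ring_hom_mult[OF h] ring_hom_add[OF h] h_a_inv)
qed

lemma (in domain) algebraic_if_pow_mem:
  assumes K: "subring K R" and x: "x \<in> carrier R" and xn: "x [^] Suc n \<in> K"
  shows "(algebraic over K) x"
proof (rule algebraicI)
  \<comment> \<open>the coefficient list, leading coefficient first, of X^(n+1) - x^(n+1)\<close>
  define q where "q = monom \<one> n @ [\<ominus> (x [^] Suc n)]"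
  have "set (monom \<one> n) \<subseteq> K"
    unfolding monom_def using subringE(2,3)[OF K] by (induction n) auto
  then have "set q \<subseteq> K"
    unfolding q_def using subringE(5)[OF K] xn by simp
  then show "q \<in> carrier (K[X])"
    unfolding univ_poly_carrier[symmetric] polynomial_def q_def monom_def by simp
  show "q \<noteq> []" unfolding q_def by simp
  show "eval q x = \<zero>"
    unfolding q_def
    using eval_append_aux[OF monom_in_carrier[OF one_closed] _ x] eval_monom[OF one_closed x] x
    by (simp add: r_neg)
qed

lemma (in ring) subring_is_subalgebra:
  assumes "subring V R" "K \<subseteq> V"
  shows "subalgebra K V R"
proof -
  have "subgroup V (add_monoid R)" using subring.axioms(1)[OF assms(1)] .
  moreover have "k \<otimes> v \<in> V" if "k \<in> K" "v \<in> V" for k v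
    using subringE(6)[OF assms(1)] assms(2) that by blast
  ultimately show ?thesis unfolding subalgebra_def subalgebra_axioms_def by blast
qed

lemma (in ring) Span_mono_scalars:
  assumes K: "subfield K R" and L: "subfield L R" and "K \<subseteq> L" and Us: "set Us \<subseteq> carrier R"
  shows "Span K Us \<subseteq> Span L Us"
proof (rule subalgebra_Span_incl[OF K])
  show "subalgebra K (Span L Us) R"
    using Span_is_subalgebra[OF L Us] \<open>K \<subseteq> L\<close>
    unfolding subalgebra_def subalgebra_axioms_def by blast
  show "set Us \<subseteq> Span L Us" by (rule Span_base_incl[OF L Us])
qed

lemma (in ring) dimension_Span_le:
  assumes K: "subfield K R"
  shows "set Us \<subseteq> carrier R \<Longrightarrow> \<exists>n \<le> length Us. dimension n K (Span K Us)"
proof (induction Us)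
  case Nil
  then show ?case by auto
next
  case (Cons u Us)
  then obtain n where n: "n \<le> length Us" "dimension n K (Span K Us)" by auto
  show ?case
  proof (cases "u \<in> Span K Us")
    case True
    then have "Span K (u # Us) \<subseteq> Span K Us"
      using Cons.prems Span_base_incl[OF K, of Us] by (intro mono_Span_subset[OF K]) auto
    then have "Span K (u # Us) = Span K Us"
      using Cons.prems mono_Span[OF K, of Us u] by auto
    then show ?thesis using n by (intro exI[of _ n]) (simp del: Span.simps)
  next
    case False
    then have "dimension (Suc n) K (Span K (u # Us))"
      using Cons.prems dimension.Suc_dim[OF _ False n(2)] by simp
    then show ?thesis using n(1) by (intro exI[of _ "Suc n"]) (simp del: Span.simps)
  qed
qed

lemma (in ring) dim_Span_le:
  assumes K: "subfield K R" and Us: "set Us \<subseteq> carrier R"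
  shows "dim K (Span K Us) \<le> length Us"
proof -
  obtain n where n: "n \<le> length Us" "dimension n K (Span K Us)"
    using dimension_Span_le[OF K Us] by blast
  have "dim K (Span K Us) = n"
    using dimI[OF K n(2)] unfolding over_def .
  with n(1) show ?thesis by simp
qed

lemma (in cring) Span_is_subring:
  assumes K: "subfield K R" and Us: "set Us \<subseteq> carrier R" and one: "\<one> \<in> Span K Us"
    and gens: "\<And>u v. u \<in> set Us \<Longrightarrow> v \<in> set Us \<Longrightarrow> u \<otimes> v \<in> Span K Us"
  shows "subring (Span K Us) R"
proof -
  note S = Span_subgroup_props[OF K Us] Span_smult_closed[OF K Us]
  have Kc: "K \<subseteq> carrier R" using subfieldE(3)[OF K] .
  \<comment> \<open>right multiplication by a is K-linear, so it suffices to check the generators\<close>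
  have mult_right: "Span K Us \<subseteq> {z \<in> carrier R. z \<otimes> a \<in> Span K Us}"
    if a: "a \<in> carrier R" and Us_a: "set Us \<subseteq> {z \<in> carrier R. z \<otimes> a \<in> Span K Us}" for a
  proof (rule subalgebra_Span_incl[OF K _ Us_a])
    have "subgroup {z \<in> carrier R. z \<otimes> a \<in> Span K Us} (add_monoid R)"
      by (rule add.subgroupI) (use a S in \<open>auto simp: l_minus l_distr intro!: exI[of _ \<zero>]\<close>)
    moreover have "k \<otimes> z \<otimes> a \<in> Span K Us"
      if "k \<in> K" "z \<in> carrier R" "z \<otimes> a \<in> Span K Us" for k z
      using that a Kc S by (auto simp: m_assoc)
    ultimately show "subalgebra K {z \<in> carrier R. z \<otimes> a \<in> Span K Us} R"
      unfolding subalgebra_def subalgebra_axioms_def using Kc by auto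
  qed
  have "x \<otimes> y \<in> Span K Us" if x: "x \<in> Span K Us" and y: "y \<in> Span K Us" for x y
  proof -
    have yc: "y \<in> carrier R" using y S by blast
    have "v \<otimes> y \<in> Span K Us" if v: "v \<in> set Us" for v
    proof -
      have "y \<otimes> v \<in> Span K Us"
        using mult_right[of v] y v gens Us by auto
      then show ?thesis using v Us yc by (simp add: m_comm subset_iff)
    qed
    then show ?thesis using mult_right[OF yc] x Us by auto
  qed
  then show ?thesis by (intro subringI) (use S one in auto)
qed

lemma (in field) finite_dimension_subring_is_subfield:
  assumes K: "subfield K R" and A: "subring A R" and "K \<subseteq> A" and fin: "finite_dimension K A"
  shows "subfield A R"
proof (rule subfieldI'[OF A])
  fix a assume a: "a \<in> A - {\<zero>}"
  have ac: "a \<in> carrier R" using a subringE(1)[OF A] by blast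
  have "subfield (simple_extension K a) R"
    using simple_extension_is_subfield[OF K ac] finite_dimension_imp_algebraic[OF K A fin] a by blast
  moreover have "a \<in> simple_extension K a"
    using simple_extension_mem[OF subfieldE(1)[OF K] ac] .
  ultimately have "inv a \<in> simple_extension K a"
    using a subfield_m_inv(1) by blast
  moreover have "simple_extension K a \<subseteq> A"
    using simple_extension_subring_incl[OF A \<open>K \<subseteq> A\<close>] a by blast
  ultimately show "inv a \<in> A" by blast
qed

lemma (in field) compositum_eq_Span:
  assumes M: "subfield M R" and L: "subfield L R" and E: "subfield E R" and "M \<subseteq> L"
    and Vs: "set Vs \<subseteq> carrier R" and E_Span: "Span M Vs = E"
  shows "compositum R L E = Span L Vs"
proof
  note E_props = subringE[OF subfieldE(1)[OF E]]
  have E_incl: "E \<subseteq> Span L Vs"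
    using Span_mono_scalars[OF M L \<open>M \<subseteq> L\<close> Vs] E_Span by blast
  have L_incl: "L \<subseteq> Span L Vs"
  proof
    fix k assume "k \<in> L"
    then have "k \<otimes> \<one> \<in> Span L Vs" using Span_smult_closed[OF L Vs] E_incl E_props(3) by blast
    then show "k \<in> Span L Vs" using \<open>k \<in> L\<close> subfieldE(3)[OF L] by auto
  qed
  have VsE: "set Vs \<subseteq> E" using Span_base_incl[OF M Vs] E_Span by blast
  have "subring (Span L Vs) R"
    by (rule Span_is_subring[OF L Vs]) (use VsE E_incl E_props(3,6) in blast)+
  then have "subfield (Span L Vs) R"
    using finite_dimension_subring_is_subfield[OF L _ L_incl Span_finite_dimension[OF L Vs]] by blast
  moreover have LE: "L \<union> E \<subseteq> carrier R" using subfieldE(3)[OF L] subfieldE(3)[OF E] by blast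
  ultimately show "compositum R L E \<subseteq> Span L Vs"
    unfolding compositum_def using generate_field_min_subfield1 L_incl E_incl by blast
  have "subalgebra L (compositum R L E) R"
    unfolding compositum_def
    by (rule subring_is_subalgebra[OF subfieldE(1)[OF generate_field_is_subfield[OF LE]]])
       (auto intro: generate_field.incl)
  moreover have "set Vs \<subseteq> compositum R L E"
    using VsE by (auto simp: compositum_def intro: generate_field.incl)
  ultimately show "Span L Vs \<subseteq> compositum R L E"
    by (rule subalgebra_Span_incl[OF L])
qed

lemma (in field) compositum_finite_dimension:
  assumes M: "subfield M R" and L: "subfield L R" and E: "subfield E R" and "M \<subseteq> L"
    and fin: "finite_dimension M E"
  shows "finite_dimension L (compositum R L E)" and "dim L (compositum R L E) \<le> dim M E"
proof -
  obtain Vs where Vs: "set Vs \<subseteq> carrier R" "length Vs = dim M E" "Span M Vs = E"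
    using exists_base[OF M finite_dimensionE[OF M fin]] unfolding over_def by blast
  then have "compositum R L E = Span L Vs"
    using compositum_eq_Span[OF M L E \<open>M \<subseteq> L\<close>] by blast
  then show "finite_dimension L (compositum R L E)" and "dim L (compositum R L E) \<le> dim M E"
    using Span_finite_dimension[OF L Vs(1)] dim_Span_le[OF L Vs(1)] Vs(2) by simp_all
qed

lemma (in field) finite_dimension_generate_field:
  assumes L: "subfield L R" and S: "finite S" "S \<subseteq> carrier R"
    and alg: "\<And>s. s \<in> S \<Longrightarrow> (algebraic over L) s"
  shows "finite_dimension L (generate_field R (L \<union> S))"
proof -
  obtain Ss where Ss: "set Ss = S" using finite_list[OF S(1)] by blast
  have Ss_carrier: "set Ss \<subseteq> carrier R" using Ss S(2) by simp
  have LS: "L \<union> S \<subseteq> carrier R" using subfieldE(3)[OF L] S(2) by blast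
  have "subfield (finite_extension L Ss) R"
    using finite_extension_is_subfield[OF L Ss_carrier] alg Ss by blast
  moreover have "L \<union> S \<subseteq> finite_extension L Ss"
    using finite_extension_incl[OF subfieldE(3)[OF L] Ss_carrier]
      finite_extension_mem[OF subfieldE(1)[OF L] Ss_carrier] Ss by blast
  ultimately have "generate_field R (L \<union> S) \<subseteq> finite_extension L Ss"
    by (rule generate_field_min_subfield1[OF LS])
  moreover have "subalgebra L (generate_field R (L \<union> S)) R"
    by (rule subring_is_subalgebra[OF subfieldE(1)[OF generate_field_is_subfield[OF LS]]])
       (auto intro: generate_field.incl)
  moreover have "finite_dimension L (finite_extension L Ss)"
    using finite_extension_finite_dimension(1)[OF L Ss_carrier] alg Ss by blast
  ultimately show ?thesis
    using subalbegra_incl_imp_finite_dimension[OF L] by blast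
qed

locale field_char_p = field R for R (structure) +
  fixes p :: nat
  assumes prime_p: "Factorial_Ring.prime p"
    and char_p: "add_pow R p \<one> = \<zero>"
begin

lemma frobenius_hom: "(\<lambda>x. x [^] p) \<in> ring_hom R R"
  by (rule ring_hom_memI) (auto simp: nat_pow_distrib frobenius_add[OF _ _ prime_p char_p])

lemma frobenius_ring_hom_ring: "ring_hom_ring R R (\<lambda>x. x [^] p)"
  by (rule ring_hom_ringI2[OF ring_axioms ring_axioms frobenius_hom])

lemma frob_image_0: "frob_image R p 0 = carrier R"
  unfolding frob_image_def by force

lemma frob_image_Suc: "frob_image R p (Suc n) = (\<lambda>x. x [^] p) ` frob_image R p n"
proof -
  have image: "frob_image R p m = (\<lambda>x. x [^] (p ^ m)) ` carrier R" for m
    unfolding frob_image_def by blast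
  have "(\<lambda>x. x [^] (p ^ Suc n)) ` carrier R = (\<lambda>x. x [^] p) ` (\<lambda>x. x [^] (p ^ n)) ` carrier R"
    unfolding image_image by (rule image_cong) (simp_all add: nat_pow_pow mult.commute)
  then show ?thesis unfolding image .
qed

end

locale power_tower_field = field_char_p +
  fixes W :: "nat \<Rightarrow> 'a set"
  assumes power_tower: "power_tower R p W"
begin

lemma tower_subfield: "subfield (W i) R"
  using power_tower unfolding power_tower_def by blast

lemma tower_eq_compositum: "j \<le> i \<Longrightarrow> W j = compositum R (W i) (frob_image R p j)"
  using power_tower unfolding power_tower_def by blast

lemma tower_incl:
  assumes "j \<le> i"
  shows "W i \<subseteq> W j" and "frob_image R p j \<subseteq> W j"
  using tower_eq_compositum[OF assms] tower_eq_compositum[of j j]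
  unfolding compositum_def by (auto intro: generate_field.incl)

lemma tower_0: "W 0 = carrier R"
proof (rule equalityI)
  show "W 0 \<subseteq> carrier R" by (rule subfieldE(3)[OF tower_subfield])
  show "carrier R \<subseteq> W 0" using tower_incl(2)[of 0 0] unfolding frob_image_0 by simp
qed

lemma frobenius_image_tower: "(\<lambda>x. x [^] p) ` W n \<subseteq> W (Suc n)"
proof -
  define P where "P = {x \<in> carrier R. x [^] p \<in> W (Suc n)}"
  have P: "subfield P R"
    unfolding P_def by (rule subfield_vimage[OF frobenius_hom tower_subfield])
  have carrier: "W (Suc n) \<union> frob_image R p n \<subseteq> carrier R"
    using subfieldE(3)[OF tower_subfield] tower_incl(2)[of n n] by blast
  moreover have "W (Suc n) \<subseteq> P"
    unfolding P_def using carrier subring_nat_pow_closed[OF subfieldE(1)[OF tower_subfield]] by blast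
  moreover have "frob_image R p n \<subseteq> P"
    unfolding P_def using carrier tower_incl(2)[of "Suc n" "Suc n"] frob_image_Suc[of n] by blast
  ultimately have "generate_field R (W (Suc n) \<union> frob_image R p n) \<subseteq> P"
    by (intro generate_field_min_subfield1[OF _ P]) auto
  then have "W n \<subseteq> P"
    using tower_eq_compositum[of n "Suc n"] unfolding compositum_def by simp
  then show ?thesis unfolding P_def by blast
qed

lemma tower_Suc_eq_compositum:
  "W (Suc n) = compositum R (W (Suc (Suc n))) ((\<lambda>x. x [^] p) ` W n)"
  unfolding compositum_def
proof
  have H: "W (Suc (Suc n)) \<union> (\<lambda>x. x [^] p) ` W n \<subseteq> W (Suc n)"
    using tower_incl(1)[of "Suc n" "Suc (Suc n)"] frobenius_image_tower by auto
  then have H_carrier: "W (Suc (Suc n)) \<union> (\<lambda>x. x [^] p) ` W n \<subseteq> carrier R"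
    using subfieldE(3)[OF tower_subfield] by blast
  show "generate_field R (W (Suc (Suc n)) \<union> (\<lambda>x. x [^] p) ` W n) \<subseteq> W (Suc n)"
    by (rule generate_field_min_subfield1[OF H_carrier tower_subfield H])
  have "frob_image R p (Suc n) \<subseteq> (\<lambda>x. x [^] p) ` W n"
    unfolding frob_image_Suc using tower_incl(2)[of n n] by blast
  then have "generate_field R (W (Suc (Suc n)) \<union> frob_image R p (Suc n))
      \<subseteq> generate_field R (W (Suc (Suc n)) \<union> (\<lambda>x. x [^] p) ` W n)"
    by (intro mono_generate_field[OF _ H_carrier]) blast
  then show "W (Suc n) \<subseteq> generate_field R (W (Suc (Suc n)) \<union> (\<lambda>x. x [^] p) ` W n)"
    using tower_eq_compositum[of "Suc n" "Suc (Suc n)"] unfolding compositum_def by simp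
qed

lemma tower_dim_step:
  assumes fin: "finite_dimension (W (Suc n)) (W n)"
  shows "finite_dimension (W (Suc (Suc n))) (W (Suc n))"
    and "dim (W (Suc (Suc n))) (W (Suc n)) \<le> dim (W (Suc n)) (W n)"
proof -
  let ?F = "\<lambda>x. x [^] p"
  note F = frobenius_ring_hom_ring
  have dimension: "dimension (dim (W (Suc n)) (W n)) (W (Suc n)) (W n)"
    using finite_dimensionE[OF tower_subfield fin] unfolding over_def .
  have "inj_on ?F (W n)"
    by (rule ring_hom_ring.img_is_subfield(1)[OF F tower_subfield one_not_zero])
  then have "dimension (dim (W (Suc n)) (W n)) (?F ` W (Suc n)) (?F ` W n)"
    by (rule ring_hom_ring.inj_hom_dimension[OF F tower_subfield one_not_zero _ dimension])
  moreover have M: "subfield (?F ` W (Suc n)) R" and E: "subfield (?F ` W n) R"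
    using ring_hom_ring.img_is_subfield(2)[OF F tower_subfield one_not_zero] by auto
  ultimately have "finite_dimension (?F ` W (Suc n)) (?F ` W n)"
    and "dim (?F ` W (Suc n)) (?F ` W n) = dim (W (Suc n)) (W n)"
    using finite_dimensionI dimI[OF M] unfolding over_def by auto
  moreover have "?F ` W (Suc n) \<subseteq> W (Suc (Suc n))" by (rule frobenius_image_tower)
  ultimately show "finite_dimension (W (Suc (Suc n))) (W (Suc n))"
    and "dim (W (Suc (Suc n))) (W (Suc n)) \<le> dim (W (Suc n)) (W n)"
    using compositum_finite_dimension[OF M tower_subfield E] tower_Suc_eq_compositum[of n] by auto
qed

lemma tower_finite_dimension_1_0:
  assumes fg: "\<exists>S. finite S \<and> S \<subseteq> carrier R \<and>
      generate_field R ((\<Inter>n. frob_image R p n) \<union> S) = carrier R"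
  shows "finite_dimension (W 1) (W 0)"
proof -
  obtain S where S: "finite S" "S \<subseteq> carrier R"
    and gen: "generate_field R ((\<Inter>n. frob_image R p n) \<union> S) = carrier R"
    using fg by blast
  have W1: "subfield (W 1) R" by (rule tower_subfield)
  have W1S: "W 1 \<union> S \<subseteq> carrier R" using subfieldE(3)[OF W1] S(2) by blast
  have "(algebraic over W 1) x" if "x \<in> carrier R" for x
  proof -
    obtain q where q: "p = Suc q" using prime_gt_0_nat[OF prime_p] not0_implies_Suc by blast
    have "x [^] p \<in> W 1"
      using that tower_incl(2)[of 1 1] frob_image_Suc[of 0] frob_image_0 by auto
    then show ?thesis
      unfolding q by (rule algebraic_if_pow_mem[OF subfieldE(1)[OF W1] that])
  qed
  then have "finite_dimension (W 1) (generate_field R (W 1 \<union> S))"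
    using finite_dimension_generate_field[OF W1 S] S(2) by blast
  moreover have "(\<Inter>n. frob_image R p n) \<union> S \<subseteq> W 1 \<union> S"
    using tower_incl(2)[of 1 1] by blast
  then have "generate_field R (W 1 \<union> S) = carrier R"
    using mono_generate_field[OF _ W1S] generate_field_incl[OF W1S] gen by blast
  ultimately show ?thesis using tower_0 by simp
qed

lemma tower_finite_dimension:
  assumes fg: "\<exists>S. finite S \<and> S \<subseteq> carrier R \<and>
      generate_field R ((\<Inter>n. frob_image R p n) \<union> S) = carrier R"
  shows "finite_dimension (W (Suc n)) (W n)"
  by (induction n) (use tower_finite_dimension_1_0[OF fg] tower_dim_step(1) in auto)

end

theorem mainTheorem7:
  fixes R :: "('a, 'b) ring_scheme" and p :: nat and W :: "nat \<Rightarrow> 'a set"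
  assumes "field R"
    and "Factorial_Ring.prime p"
    and "add_pow R p \<one>\<^bsub>R\<^esub> = \<zero>\<^bsub>R\<^esub>"
    and "\<exists>S. finite S \<and> S \<subseteq> carrier R \<and>
           generate_field R ((\<Inter>n. frob_image R p n) \<union> S) = carrier R"
    and "power_tower R p W"
  shows "\<forall>n\<ge>1. ring.dim R (W (n + 1)) (W n) \<le> ring.dim R (W n) (W (n - 1))"
proof -
  interpret power_tower_field R p W
    using assms by (simp add: power_tower_field_def power_tower_field_axioms_def
        field_char_p_def field_char_p_axioms_def)
  show ?thesis
  proof (intro allI impI)
    fix n :: nat
    assume "n \<ge> 1"
    then obtain m where m: "n = Suc m" using not0_implies_Suc by force
    show "dim (W (n + 1)) (W n) \<le> dim (W n) (W (n - 1))"
      using tower_dim_step(2)[OF tower_finite_dimension[OF assms(4)]] unfolding m by simp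
  qed
qed

end
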